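(* There is a family $\mathcal{H}$ of countably infinite $G_\delta$-subsets of the Euclidean real line $\mathbb{R}$ such that $|\mathcal{H}|=\mathfrak{c}$ and any two distinct members of $\mathcal{H}$ are non-homeomorphic as subspaces of $\mathbb{R}$.
   Context: $\mathfrak{c}=|\mathbb{R}|$. *)

theory Defs
  imports "HOL-Analysis.Analysis" "HOL-Library.Equipollence"
begin

end

theory Submission
  imports Defs
begin

(* The ranks r for which some
  point of the r-th but not the (r+1)-st derived set of A has no compact neighbourhood in A form
  a topological invariant of A.

  Let tower m be {0} together with a sequence of shrunken copies of tower (m - 1) converging to 0,
  a countable compact set whose m-th derived set is {0}. The punctured cluster of rank m is built
  the same way from copies of tower m with their top points removed; the removed points accumulate
  at 0, so it is locally compact except at 0, which has rank m. For S a set of naturals, placing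
  the punctured cluster of rank n + 1 at 3n when n is in S, and a single point there otherwise,
  gives a countable set that is a closed set minus a countable set, hence G_delta, and whose
  invariant is S + 1. So we obtain continuum many pairwise non-homeomorphic such sets. *)

section \<open>Derived sets and local compactness\<close>

definition derived :: "'a::topological_space set \<Rightarrow> 'a set" where
  "derived A = {x \<in> A. x islimpt A}"

definition locally_compact_at :: "'a::topological_space set \<Rightarrow> 'a \<Rightarrow> bool" where
  "locally_compact_at A x \<longleftrightarrow> (\<exists>U K. open U \<and> x \<in> U \<and> compact K \<and> K \<subseteq> A \<and> U \<inter> A \<subseteq> K)"

definition nonlc_ranks :: "'a::topological_space set \<Rightarrow> nat set" where
  "nonlc_ranks A =
     {r. \<exists>x \<in> (derived ^^ r) A - (derived ^^ Suc r) A. \<not> locally_compact_at A x}"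

lemma derived_subset: "derived A \<subseteq> A"
  by (auto simp: derived_def)

lemma derived_iterate_subset: "(derived ^^ r) A \<subseteq> A"
  by (induction r) (use derived_subset in auto)

lemma derived_iterate_antimono: "r \<le> s \<Longrightarrow> (derived ^^ s) A \<subseteq> (derived ^^ r) A"
proof (induction s)
  case (Suc s)
  then show ?case
    using derived_subset by (auto simp: le_Suc_eq)
qed simp

lemma derived_finite:
  fixes A :: "'a::t1_space set"
  shows "finite A \<Longrightarrow> derived A = {}"
  by (auto simp: derived_def islimpt_finite)

lemma derived_insert:
  fixes A :: "'a::t1_space set"
  shows "derived (insert a A) = derived A \<union> {x. x = a \<and> a islimpt A}"
  by (auto simp: derived_def islimpt_insert)

lemma derived_Diff_singleton:
  fixes A :: "'a::t1_space set"
  shows "derived (A - {a}) = derived A - {a}"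
  using derived_insert[of a "A - {a}"] derived_insert[of a A] islimpt_insert[of _ a "A - {a}"]
  by (auto simp: derived_def)

lemma islimpt_open_cong:
  assumes "open V" "x \<in> V" "V \<inter> A = V \<inter> B"
  shows "x islimpt A \<longleftrightarrow> x islimpt B"
proof -
  have local: "x islimpt P \<longleftrightarrow> x islimpt P \<inter> V" for P
  proof
    assume "x islimpt P"
    then show "x islimpt P \<inter> V"
      using islimpt_Int_eventually eventually_at_in_open'[OF assms(1,2)] by blast
  next
    assume "x islimpt P \<inter> V"
    then show "x islimpt P"
      by (rule islimpt_subset) simp
  qed
  have "A \<inter> V = B \<inter> V"
    using assms(3) by blast
  then show ?thesis
    using local[of A] local[of B] by simp
qed

lemma derived_UN_separated:
  assumes "\<And>i. A i \<subseteq> U i" "\<And>i. open (U i)" "\<And>i j. i \<noteq> j \<Longrightarrow> U i \<inter> A j = {}"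
  shows "derived (\<Union>i. A i) = (\<Union>i. derived (A i))"
proof -
  have "x islimpt (\<Union>j. A j) \<longleftrightarrow> x islimpt A i" if "x \<in> A i" for x i
  proof (rule islimpt_open_cong)
    have "U i \<inter> A j = {}" if "j \<noteq> i" for j
      using assms(3) that by simp
    then show "U i \<inter> (\<Union>j. A j) = U i \<inter> A i"
      by (auto; metis IntI empty_iff)
  qed (use assms(1,2) that in auto)
  then show ?thesis
    by (auto simp: derived_def intro: islimpt_subset)
qed

lemma homeomorphism_islimpt_image:
  assumes h: "homeomorphism S T f g" and "A \<subseteq> S" "x \<in> S" "x islimpt A"
  shows "f x islimpt f ` A"
proof -
  have "A - {x} \<subseteq> f -` (f ` A - {f x}) \<inter> S"
  proof
    fix y assume y: "y \<in> A - {x}"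
    then have "f y \<noteq> f x"
      using assms(2,3) homeomorphism_apply1[OF h] by (metis DiffE insertI1 subsetD)
    then show "y \<in> f -` (f ` A - {f x}) \<inter> S"
      using y assms(2) by auto
  qed
  then have "x islimpt f -` (f ` A - {f x}) \<inter> S"
    using assms(4) islimpt_punctured islimpt_subset by metis
  then have "f x islimpt f ` A - {f x}"
    using islimpt_image[OF _ _ assms(3) homeomorphism_cont1[OF h]] by blast
  then show ?thesis
    using islimpt_subset by blast
qed

lemma homeomorphism_derived_image:
  assumes h: "homeomorphism S T f g" and A: "A \<subseteq> S"
  shows "derived (f ` A) = f ` derived A"
proof
  show "f ` derived A \<subseteq> derived (f ` A)"
  proof
    fix y assume "y \<in> f ` derived A"
    then obtain x where x: "x \<in> A" "x islimpt A" "y = f x"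
      by (auto simp: derived_def)
    then have "f x islimpt f ` A"
      using homeomorphism_islimpt_image[OF h A] A by blast
    then show "y \<in> derived (f ` A)"
      using x by (simp add: derived_def)
  qed
next
  have "g ` f ` A = (\<lambda>a. g (f a)) ` A"
    by (simp add: image_image)
  also have "\<dots> = (\<lambda>a. a) ` A"
    by (rule image_cong) (use A homeomorphism_apply1[OF h] in auto)
  finally have gf: "g ` f ` A = A"
    by simp
  show "derived (f ` A) \<subseteq> f ` derived A"
  proof
    fix y assume "y \<in> derived (f ` A)"
    then obtain x where x: "x \<in> A" "y = f x" and "y islimpt f ` A"
      by (auto simp: derived_def)
    moreover have "f ` A \<subseteq> T" "y \<in> T"
      using x A homeomorphism_image1[OF h] by auto
    ultimately have "g y islimpt A"
      using homeomorphism_islimpt_image[OF homeomorphism_symD[OF h], of "f ` A" y] gf by simp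
    moreover have "g y = x"
      using x A homeomorphism_apply1[OF h] by blast
    ultimately show "y \<in> f ` derived A"
      using x by (simp add: derived_def)
  qed
qed

lemma homeomorphism_derived_iterate:
  assumes h: "homeomorphism A B f g"
  shows "(derived ^^ r) B = f ` (derived ^^ r) A"
proof (induction r)
  case 0
  then show ?case using homeomorphism_image1[OF h] by simp
next
  case (Suc r)
  then show ?case
    using homeomorphism_derived_image[OF h derived_iterate_subset] by simp
qed

lemma homeomorphism_locally_compact_at:
  assumes h: "homeomorphism A B f g" and x: "x \<in> A" and lc: "locally_compact_at A x"
  shows "locally_compact_at B (f x)"
proof -
  obtain U K where UK: "open U" "x \<in> U" "compact K" "K \<subseteq> A" "U \<inter> A \<subseteq> K"
    using lc by (auto simp: locally_compact_at_def)
  obtain V where V: "open V" "V \<inter> B = g -` U \<inter> B"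
    using homeomorphism_cont2[OF h] UK(1) by (meson continuous_on_open_invariant)
  have "compact (f ` K)"
    using compact_continuous_image[OF continuous_on_subset[OF homeomorphism_cont1[OF h] UK(4)] UK(3)] .
  moreover have "f ` K \<subseteq> B"
    using UK(4) homeomorphism_image1[OF h] by blast
  moreover have "f x \<in> V"
    using V(2) UK(2) x homeomorphism_apply1[OF h] homeomorphism_image1[OF h] by blast
  moreover have "V \<inter> B \<subseteq> f ` K"
  proof
    fix y assume y: "y \<in> V \<inter> B"
    then have "g y \<in> K"
      using V(2) UK(5) homeomorphism_image2[OF h] by blast
    then show "y \<in> f ` K"
      using y homeomorphism_apply2[OF h] by (metis IntD2 image_eqI)
  qed
  ultimately show ?thesis
    using V(1) unfolding locally_compact_at_def by blast
qed

lemma homeomorphism_nonlc_ranks_subset: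
  assumes h: "homeomorphism A B f g"
  shows "nonlc_ranks A \<subseteq> nonlc_ranks B"
proof
  fix r assume "r \<in> nonlc_ranks A"
  then obtain x where x: "x \<in> (derived ^^ r) A" "x \<notin> (derived ^^ Suc r) A"
      and nlc: "\<not> locally_compact_at A x"
    by (auto simp: nonlc_ranks_def)
  have xA: "x \<in> A"
    using x(1) derived_iterate_subset by blast
  have "f x \<in> (derived ^^ r) B"
    using x(1) homeomorphism_derived_iterate[OF h] by blast
  moreover have "f x \<notin> (derived ^^ Suc r) B"
  proof
    assume "f x \<in> (derived ^^ Suc r) B"
    then obtain y where y: "y \<in> (derived ^^ Suc r) A" "f x = f y"
      using homeomorphism_derived_iterate[OF h, of "Suc r"] by blast
    moreover have "y \<in> A"
      using y(1) derived_iterate_subset by blast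
    ultimately have "y = x"
      using xA homeomorphism_apply1[OF h] by metis
    then show False
      using x(2) y(1) by blast
  qed
  moreover have "\<not> locally_compact_at B (f x)"
  proof
    assume "locally_compact_at B (f x)"
    then have "locally_compact_at A (g (f x))"
      using homeomorphism_locally_compact_at[OF homeomorphism_symD[OF h]]
        homeomorphism_image1[OF h] xA by blast
    then show False
      using nlc homeomorphism_apply1[OF h xA] by simp
  qed
  ultimately show "r \<in> nonlc_ranks B"
    unfolding nonlc_ranks_def by blast
qed

lemma homeomorphic_nonlc_ranks_eq: "A homeomorphic B \<Longrightarrow> nonlc_ranks A = nonlc_ranks B"
  by (metis homeomorphic_def homeomorphism_nonlc_ranks_subset homeomorphism_symD subset_antisym)

lemma not_locally_compact_at:
  fixes A :: "'a::t2_space set"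
  assumes lim: "p \<longlonglongrightarrow> x" and out: "\<And>k. p k \<notin> A" and lp: "\<And>k. p k islimpt A"
  shows "\<not> locally_compact_at A x"
proof
  assume "locally_compact_at A x"
  then obtain U K where UK: "open U" "x \<in> U" "compact K" "K \<subseteq> A" "U \<inter> A \<subseteq> K"
    by (auto simp: locally_compact_at_def)
  obtain k where "p k \<in> U"
    using lim UK(1,2) by (metis eventually_sequentially le_refl topological_tendstoD)
  then have "p k islimpt U \<inter> A"
    using islimpt_open_cong[OF UK(1), of "p k" A "U \<inter> A"] lp by blast
  then have "p k islimpt K"
    using UK(5) islimpt_subset by blast
  then have "p k \<in> K"
    using compact_imp_closed[OF UK(3)] closed_limpt by blast
  then show False
    using UK(4) out by blast
qed

lemma locally_compact_at_if_locally_closed: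
  fixes A C :: "'a::heine_borel set"
  assumes "closed C" "open V" "x \<in> V" "V \<inter> A = V \<inter> C"
  shows "locally_compact_at A x"
proof -
  obtain e where e: "e > 0" "cball x e \<subseteq> V"
    using assms(2,3) open_contains_cball by blast
  have "compact (C \<inter> cball x e)"
    using assms(1) by (simp add: compact_Int_closed compact_cball closed_Int_compact)
  moreover have "C \<inter> cball x e \<subseteq> A" "ball x e \<inter> A \<subseteq> C \<inter> cball x e"
    using assms(4) e(2) ball_subset_cball by blast+
  moreover have "open (ball x e)" "x \<in> ball x e"
    using e(1) by auto
  ultimately show ?thesis
    unfolding locally_compact_at_def by blast
qed

lemma closed_Un_UN_eventually_far:
  fixes F :: "nat \<Rightarrow> 'a::metric_space set"
  assumes closed: "\<And>n. closed (F n)" "closed Z"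
    and far: "\<And>x. x \<notin> Z \<Longrightarrow> \<exists>e>0. \<forall>\<^sub>F n in sequentially. F n \<inter> ball x e = {}"
  shows "closed (Z \<union> (\<Union>n. F n))"
  unfolding closed_limpt
proof (intro allI impI)
  fix x assume lp: "x islimpt Z \<union> (\<Union>n. F n)"
  show "x \<in> Z \<union> (\<Union>n. F n)"
  proof (cases "x \<in> Z")
    case False
    then obtain e where e: "e > 0" and "\<forall>\<^sub>F n in sequentially. F n \<inter> ball x e = {}"
      using far by blast
    then obtain N where N: "\<And>n. n \<ge> N \<Longrightarrow> F n \<inter> ball x e = {}"
      unfolding eventually_sequentially by blast
    have "(\<Union>n. F n) \<inter> ball x e \<subseteq> (\<Union>n<N. F n)"
    proof
      fix y assume "y \<in> (\<Union>n. F n) \<inter> ball x e"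
      then obtain n where "y \<in> F n" "y \<in> ball x e"
        by blast
      moreover from this have "n < N"
        using N by (meson disjoint_iff not_le)
      ultimately show "y \<in> (\<Union>n<N. F n)"
        by blast
    qed
    then have "(Z \<union> (\<Union>n. F n)) \<inter> ball x e \<subseteq> Z \<union> (\<Union>n<N. F n)"
      by blast
    moreover have "x islimpt (Z \<union> (\<Union>n. F n)) \<inter> ball x e"
      using islimpt_Int_eventually[OF lp eventually_at_in_open'] e by simp
    ultimately have "x islimpt Z \<union> (\<Union>n<N. F n)"
      using islimpt_subset by blast
    moreover have "closed (Z \<union> (\<Union>n<N. F n))"
      using closed by (intro closed_Un closed_UN) auto
    ultimately show ?thesis
      using closed_limpt by blast
  qed simp
qed

lemma homeomorphism_affine:
  fixes a c :: real
  assumes "a \<noteq> 0"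
  shows "homeomorphism UNIV UNIV (\<lambda>t. c + a * t) (\<lambda>t. (t - c) / a)"
proof (rule homeomorphismI)
  show "continuous_on UNIV (\<lambda>t. c + a * t)"
    by (intro continuous_intros)
  show "continuous_on UNIV (\<lambda>t. (t - c) / a)"
    using assms by (intro continuous_intros) auto
  show "\<And>y. c + a * ((y - c) / a) = y"
    using assms by simp
qed (use assms in auto)

lemma derived_affine_image:
  fixes a c :: real
  assumes "a \<noteq> 0"
  shows "derived ((\<lambda>t. c + a * t) ` A) = (\<lambda>t. c + a * t) ` derived A"
  using homeomorphism_derived_image[OF homeomorphism_affine[OF assms]] by simp

lemma islimpt_affine_image:
  fixes a c :: real
  assumes "a \<noteq> 0" "x islimpt A"
  shows "c + a * x islimpt (\<lambda>t. c + a * t) ` A"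
  using homeomorphism_islimpt_image[OF homeomorphism_affine[OF assms(1)]] assms(2) by simp

lemma countable_imp_fsigma_in:
  fixes S :: "'a::t1_space set"
  assumes "countable S"
  shows "fsigma_in euclidean S"
proof -
  have "fsigma_in euclidean (\<Union>x\<in>S. {x})"
    using assms by (intro fsigma_in_Union closed_imp_fsigma_in) auto
  then show ?thesis
    by simp
qed

section \<open>Shrunken and translated copies\<close>

definition shrink :: "nat \<Rightarrow> real \<Rightarrow> real" where
  "shrink k t = (1/4)^k * (2 + t) / 4"

definition cluster :: "real set \<Rightarrow> real set" where
  "cluster A = insert 0 (\<Union>k. shrink k ` A)"

primrec tower :: "nat \<Rightarrow> real set" where
  "tower 0 = {0}"
| "tower (Suc m) = cluster (tower m)"

definition punctured_cluster :: "nat \<Rightarrow> real set" where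
  "punctured_cluster m = cluster (tower m - {0})"

lemma shrink_affine: "shrink k = (\<lambda>t. (1/4)^k / 2 + (1/4)^k / 4 * t)"
  by (auto simp: shrink_def field_simps)

lemma derived_shrink_image: "derived (shrink k ` A) = shrink k ` derived A"
  unfolding shrink_affine by (rule derived_affine_image) simp

lemma islimpt_shrink_image: "x islimpt A \<Longrightarrow> shrink k x islimpt shrink k ` A"
  using islimpt_affine_image[of "(1/4)^k / 4" x A "(1/4)^k / 2"] by (simp add: shrink_affine)

lemma continuous_on_shrink: "continuous_on A (shrink k)"
  unfolding shrink_affine by (intro continuous_intros)

lemma shrink_bounds:
  assumes "t \<in> {0..1}"
  shows "(1/4)^Suc k < shrink k t" "shrink k t < (1/4)^k"
  using assms by (simp_all add: shrink_def field_simps)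

lemma shrink_pos: "t \<in> {0..1} \<Longrightarrow> 0 < shrink k t"
  by (auto simp: shrink_def)

lemma shrink_in_unit: "t \<in> {0..1} \<Longrightarrow> shrink k t \<in> {0..1}"
  using shrink_pos[of t k] shrink_bounds(2)[of t k] power_le_one[of "1/4::real" k] by auto

lemma four_times_quarter_power_le: "j < k \<Longrightarrow> 4 * (1/4::real)^k \<le> (1/4)^j"
proof -
  assume "j < k"
  then obtain d where k: "k = Suc (j + d)"
    using less_iff_Suc_add by auto
  have "(1/4::real)^k = (1/4)^j * (1/4) * (1/4)^d"
    by (simp add: k power_add)
  also have "\<dots> \<le> (1/4)^j * (1/4)"
    by (simp add: power_le_one)
  finally show ?thesis
    by simp
qed

lemma shrink_index_unique:
  assumes t: "t \<in> {0..1}" and range: "shrink j t \<in> {(1/4)^Suc k <..< (1/4)^k}"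
  shows "j = k"
proof (rule ccontr)
  have t01: "0 \<le> t" "t \<le> 1" and pos: "(0::real) \<le> (1/4)^j"
    using t by auto
  assume "j \<noteq> k"
  then consider "j < k" | "k < j"
    by linarith
  then show False
  proof cases
    case 1
    have "(1/4::real)^j * 2 \<le> (1/4)^j * (2 + t)"
      using t01 by simp
    then have "(1/4)^k \<le> shrink j t"
      using four_times_quarter_power_le[OF 1] pos unfolding shrink_def by linarith
    then show False
      using range by simp
  next
    case 2
    have "(1/4::real)^j * (2 + t) \<le> (1/4)^j * 3"
      using t01 by simp
    then have "shrink j t \<le> (1/4)^Suc k"
      using four_times_quarter_power_le[OF 2] pos unfolding shrink_def power_Suc by linarith
    then show False
      using range by simp
  qed
qed

lemma shrink_eq_iff:
  assumes "a \<in> {0..1}" "b \<in> {0..1}"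
  shows "shrink j a = shrink k b \<longleftrightarrow> j = k \<and> a = b"
proof
  assume eq: "shrink j a = shrink k b"
  then have "j = k"
    using shrink_index_unique[OF assms(1), of j k] shrink_bounds[OF assms(2), of k] by simp
  then show "j = k \<and> a = b"
    using eq by (simp add: shrink_def)
qed simp

lemma shrink_tendsto_zero: "(\<lambda>k. shrink k t) \<longlonglongrightarrow> 0"
proof -
  have "(\<lambda>k. (1/4::real)^k * ((2 + t) / 4)) \<longlonglongrightarrow> 0 * ((2 + t) / 4)"
    by (intro tendsto_mult tendsto_const LIMSEQ_realpow_zero) auto
  then show ?thesis
    by (simp add: shrink_def)
qed

lemma zero_in_cluster [simp]: "0 \<in> cluster A"
  by (simp add: cluster_def)

lemma cluster_empty [simp]: "cluster {} = {0}"
  by (simp add: cluster_def)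

lemma cluster_subset: "A \<subseteq> {0..1} \<Longrightarrow> cluster A \<subseteq> {0..1}"
  using shrink_in_unit by (auto simp: cluster_def)

lemma countable_cluster: "countable A \<Longrightarrow> countable (cluster A)"
  by (simp add: cluster_def)

lemma cluster_Diff:
  assumes "A \<subseteq> {0..1}" "B \<subseteq> {0..1}"
  shows "cluster (A - B) = cluster A - (cluster B - {0})"
proof (intro equalityI subsetI)
  fix x assume "x \<in> cluster (A - B)"
  then consider "x = 0" | k a where "a \<in> A - B" "x = shrink k a"
    by (auto simp: cluster_def)
  then show "x \<in> cluster A - (cluster B - {0})"
  proof cases
    case 2
    then have "x \<notin> shrink j ` B" for j
      using assms shrink_eq_iff by blast
    moreover have "x \<noteq> 0"
      using 2 assms shrink_pos[of a k] by auto
    ultimately show ?thesis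
      using 2 by (auto simp: cluster_def)
  qed simp
next
  fix x assume "x \<in> cluster A - (cluster B - {0})"
  then show "x \<in> cluster (A - B)"
    by (auto simp: cluster_def)
qed

lemma derived_cluster:
  assumes A: "A \<subseteq> {0..1}" "A \<noteq> {}"
  shows "derived (cluster A) = cluster (derived A)"
proof -
  have "derived (\<Union>k. shrink k ` A) = (\<Union>k. derived (shrink k ` A))"
  proof (rule derived_UN_separated)
    show "shrink k ` A \<subseteq> {(1/4)^Suc k <..< (1/4)^k}" for k
    proof
      fix y assume "y \<in> shrink k ` A"
      then obtain a where "a \<in> A" "y = shrink k a"
        by blast
      then show "y \<in> {(1/4)^Suc k <..< (1/4)^k}"
        using A(1) shrink_bounds[of a k] by auto
    qed
    show "{(1/4)^Suc k <..< (1/4)^k} \<inter> shrink j ` A = {}" if "k \<noteq> j" for k j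
    proof -
      have "shrink j a \<notin> {(1/4)^Suc k <..< (1/4)^k}" if "a \<in> A" for a
        using shrink_index_unique[of a j k] A(1) \<open>k \<noteq> j\<close> that by auto
      then show ?thesis
        by blast
    qed
  qed simp
  moreover have "0 islimpt (\<Union>k. shrink k ` A)"
  proof -
    obtain a where a: "a \<in> A"
      using A(2) by auto
    then have "shrink k a \<in> (\<Union>k. shrink k ` A) - {0}" for k
      using A(1) shrink_pos[of a k] by auto
    then show ?thesis
      unfolding islimpt_sequential using shrink_tendsto_zero[of a]
      by (intro exI[of _ "\<lambda>k. shrink k a"]) simp
  qed
  ultimately show ?thesis
    unfolding cluster_def derived_insert by (auto simp: derived_shrink_image)
qed

lemma shrink_image_Int_ball_empty:
  assumes "A \<subseteq> {0..1}" "(1/4)^k < \<bar>x\<bar> / 2"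
  shows "shrink k ` A \<inter> ball x (\<bar>x\<bar> / 2) = {}"
proof -
  have "shrink k a \<notin> ball x (\<bar>x\<bar> / 2)" if "a \<in> A" for a
  proof -
    have "\<bar>shrink k a\<bar> < \<bar>x\<bar> / 2"
      using shrink_bounds(2)[of a k] shrink_pos[of a k] assms that by auto
    then show ?thesis
      using abs_triangle_ineq2[of x "shrink k a"] by (simp add: dist_real_def)
  qed
  then show ?thesis
    by blast
qed

lemma closed_cluster:
  assumes "compact A" "A \<subseteq> {0..1}"
  shows "closed (cluster A)"
proof -
  have "closed ({0} \<union> (\<Union>k. shrink k ` A))"
  proof (rule closed_Un_UN_eventually_far)
    show "closed (shrink k ` A)" for k
      using compact_continuous_image[OF continuous_on_shrink assms(1)] compact_imp_closed by blast
  next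
    fix x :: real assume "x \<notin> {0}"
    then have "\<bar>x\<bar> / 2 > 0"
      by simp
    moreover have "(\<lambda>k. (1/4::real)^k) \<longlonglongrightarrow> 0"
      by (rule LIMSEQ_realpow_zero) auto
    ultimately have "\<forall>\<^sub>F k in sequentially. (1/4::real)^k < \<bar>x\<bar> / 2"
      using order_tendstoD(2) by blast
    then have "\<forall>\<^sub>F k in sequentially. shrink k ` A \<inter> ball x (\<bar>x\<bar> / 2) = {}"
      by (rule eventually_mono) (rule shrink_image_Int_ball_empty[OF assms(2)])
    then show "\<exists>e>0. \<forall>\<^sub>F k in sequentially. shrink k ` A \<inter> ball x e = {}"
      using \<open>\<bar>x\<bar> / 2 > 0\<close> by (intro exI[of _ "\<bar>x\<bar> / 2"]) simp
  qed simp
  then show ?thesis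
    by (simp add: cluster_def)
qed

lemma tower_subset: "tower m \<subseteq> {0..1}"
  by (induction m) (simp_all add: cluster_subset)

lemma zero_in_tower [simp]: "0 \<in> tower m"
  by (cases m) simp_all

lemma compact_tower: "compact (tower m)"
proof (induction m)
  case (Suc m)
  have "bounded (tower (Suc m))"
    by (rule bounded_subset[OF bounded_closed_interval tower_subset])
  moreover have "closed (tower (Suc m))"
    using closed_cluster[OF Suc tower_subset] by simp
  ultimately show ?case
    by (simp add: compact_eq_bounded_closed)
qed simp

lemma countable_tower: "countable (tower m)"
  by (induction m) (simp_all add: countable_cluster)

lemma derived_tower: "derived (tower (Suc m)) = tower m"
proof (induction m)
  case 0
  show ?case
    using derived_cluster[of "{0}"] by (simp add: derived_finite)
next
  case (Suc m)
  have "tower (Suc m) \<noteq> {}"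
    by (metis emptyE zero_in_tower)
  then have "derived (tower (Suc (Suc m))) = cluster (derived (tower (Suc m)))"
    unfolding tower.simps(2)[of "Suc m"] by (rule derived_cluster[OF tower_subset])
  then show ?case
    using Suc.IH by simp
qed

lemma punctured_cluster_subset: "punctured_cluster m \<subseteq> {0..1}"
  unfolding punctured_cluster_def using tower_subset by (intro cluster_subset) blast

lemma derived_punctured_cluster: "derived (punctured_cluster (Suc m)) = punctured_cluster m"
proof -
  have "shrink 0 0 \<in> shrink 0 ` tower m"
    by (rule imageI) simp
  moreover have "shrink 0 0 \<noteq> 0"
    by (simp add: shrink_def)
  ultimately have "shrink 0 0 \<in> tower (Suc m) - {0}"
    unfolding tower.simps cluster_def by blast
  then have "derived (punctured_cluster (Suc m)) = cluster (derived (tower (Suc m) - {0}))"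
    unfolding punctured_cluster_def using tower_subset
    by (intro derived_cluster) (auto simp del: tower.simps)
  then show ?thesis
    by (simp only: derived_Diff_singleton derived_tower punctured_cluster_def)
qed

lemma derived_iterate_punctured_cluster: "(derived ^^ m) (punctured_cluster m) = {0}"
proof (induction m)
  case 0
  then show ?case
    by (simp add: punctured_cluster_def)
next
  case (Suc m)
  then show ?case
    by (simp only: funpow_Suc_right comp_def derived_punctured_cluster)
qed

lemma zero_in_derived_iterate_punctured_cluster:
  "0 \<in> (derived ^^ r) (punctured_cluster m) \<longleftrightarrow> r \<le> m"
proof
  assume zero: "0 \<in> (derived ^^ r) (punctured_cluster m)"
  show "r \<le> m"
  proof (rule ccontr)
    assume "\<not> r \<le> m"
    then have "(derived ^^ r) (punctured_cluster m) \<subseteq> (derived ^^ Suc m) (punctured_cluster m)"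
      by (intro derived_iterate_antimono) simp
    also have "\<dots> = {}"
      using derived_iterate_punctured_cluster[of m] derived_finite[of "{0::real}"] by simp
    finally show False
      using zero by blast
  qed
next
  assume "r \<le> m"
  then show "0 \<in> (derived ^^ r) (punctured_cluster m)"
    using derived_iterate_antimono derived_iterate_punctured_cluster by blast
qed

definition shift :: "nat \<Rightarrow> real \<Rightarrow> real" where
  "shift n t = 3 * real n + t"

definition spread :: "(nat \<Rightarrow> real set) \<Rightarrow> real set" where
  "spread D = (\<Union>n. shift n ` D n)"

lemma derived_shift_image: "derived (shift n ` A) = shift n ` derived A"
  using derived_affine_image[of 1 "3 * real n" A] by (simp add: shift_def[abs_def])

lemma islimpt_shift_image: "x islimpt A \<Longrightarrow> shift n x islimpt shift n ` A"
  using islimpt_affine_image[of 1 x A "3 * real n"] by (simp add: shift_def[abs_def])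

lemma shift_index_unique:
  assumes "a \<in> {0..1}" "shift m a \<in> {3 * real n - 1 <..< 3 * real n + 2}"
  shows "m = n"
proof -
  have "real m < real (Suc n)" "real n < real (Suc m)"
    using assms by (auto simp: shift_def)
  then show ?thesis
    by simp
qed

lemma shift_eq_iff:
  assumes "a \<in> {0..1}" "b \<in> {0..1}"
  shows "shift m a = shift n b \<longleftrightarrow> m = n \<and> a = b"
proof
  assume eq: "shift m a = shift n b"
  then have "m = n"
    using shift_index_unique[OF assms(1), of m n] assms(2) by (simp add: shift_def)
  then show "m = n \<and> a = b"
    using eq by (simp add: shift_def)
qed simp

lemma shift_in_spread_iff:
  assumes "a \<in> {0..1}" "\<And>n. D n \<subseteq> {0..1}"
  shows "shift n a \<in> spread D \<longleftrightarrow> a \<in> D n"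
proof
  assume "shift n a \<in> spread D"
  then obtain m b where b: "b \<in> D m" "shift n a = shift m b"
    unfolding spread_def by blast
  moreover have "b \<in> {0..1}"
    using b(1) assms(2) by blast
  ultimately show "a \<in> D n"
    using assms(1) shift_eq_iff[of a b n m] by auto
qed (auto simp: spread_def)

lemma spread_Diff:
  assumes "\<And>n. D n \<subseteq> {0..1}" "\<And>n. D' n \<subseteq> {0..1}"
  shows "spread (\<lambda>n. D n - D' n) = spread D - spread D'"
proof (intro equalityI subsetI)
  fix x assume "x \<in> spread (\<lambda>n. D n - D' n)"
  then obtain n a where a: "a \<in> D n" "a \<notin> D' n" and x: "x = shift n a"
    unfolding spread_def by blast
  have "x \<notin> spread D'"
    using a assms shift_in_spread_iff[of a D' n] x by blast
  moreover have "x \<in> spread D"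
    using a(1) x by (auto simp: spread_def)
  ultimately show "x \<in> spread D - spread D'"
    by blast
next
  fix x assume x: "x \<in> spread D - spread D'"
  then obtain n a where a: "a \<in> D n" "x = shift n a"
    unfolding spread_def by blast
  then have "a \<notin> D' n"
    using x by (auto simp: spread_def)
  then show "x \<in> spread (\<lambda>n. D n - D' n)"
    using a by (auto simp: spread_def)
qed

lemma derived_spread:
  assumes "\<And>n. D n \<subseteq> {0..1}"
  shows "derived (spread D) = spread (\<lambda>n. derived (D n))"
proof -
  have "derived (\<Union>n. shift n ` D n) = (\<Union>n. derived (shift n ` D n))"
  proof (rule derived_UN_separated)
    show "shift n ` D n \<subseteq> {3 * real n - 1 <..< 3 * real n + 2}" for n
      using assms[of n] by (auto simp: shift_def)
    show "{3 * real n - 1 <..< 3 * real n + 2} \<inter> shift m ` D m = {}" if "n \<noteq> m" for n m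
    proof -
      have "shift m a \<notin> {3 * real n - 1 <..< 3 * real n + 2}" if "a \<in> D m" for a
        using shift_index_unique[of a m n] assms[of m] \<open>n \<noteq> m\<close> that by auto
      then show ?thesis
        by blast
    qed
  qed simp
  then show ?thesis
    by (simp add: spread_def derived_shift_image)
qed

lemma derived_iterate_spread:
  assumes "\<And>n. D n \<subseteq> {0..1}"
  shows "(derived ^^ r) (spread D) = spread (\<lambda>n. (derived ^^ r) (D n))"
proof (induction r)
  case (Suc r)
  have "\<And>n. (derived ^^ r) (D n) \<subseteq> {0..1}"
    using assms derived_iterate_subset by (metis subset_trans)
  then show ?case
    using Suc.IH derived_spread by simp
qed simp

lemma shift_image_Int_ball_empty:
  assumes "D \<subseteq> {0..1}" "\<bar>x\<bar> + 1 \<le> real n"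
  shows "shift n ` D \<inter> ball x 1 = {}"
proof -
  have "shift n a \<notin> ball x 1" if "a \<in> D" for a
  proof -
    have "x + 1 \<le> 3 * real n + a"
      using assms that abs_ge_self[of x] of_nat_0_le_iff[of n] by auto
    then show ?thesis
      unfolding shift_def mem_ball dist_real_def abs_less_iff by linarith
  qed
  then show ?thesis
    by blast
qed

lemma closed_spread:
  assumes closed: "\<And>n. closed (D n)" and unit: "\<And>n. D n \<subseteq> {0..1}"
  shows "closed (spread D)"
proof -
  have "closed ({} \<union> (\<Union>n. shift n ` D n))"
  proof (rule closed_Un_UN_eventually_far)
    show "closed (shift n ` D n)" for n
      unfolding shift_def[abs_def] using closed by (rule closed_translation)
  next
    fix x :: real
    obtain N :: nat where N: "\<bar>x\<bar> + 1 \<le> real N"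
      using real_arch_simple by blast
    have "shift n ` D n \<inter> ball x 1 = {}" if "n \<ge> N" for n
      using N of_nat_mono[where 'a=real, OF that] by (intro shift_image_Int_ball_empty[OF unit]) simp
    then show "\<exists>e>0. \<forall>\<^sub>F n in sequentially. shift n ` D n \<inter> ball x e = {}"
      unfolding eventually_sequentially by (intro exI[of _ 1]) auto
  qed simp
  then show ?thesis
    by (simp add: spread_def)
qed

lemma countable_spread: "(\<And>n. countable (D n)) \<Longrightarrow> countable (spread D)"
  by (simp add: spread_def)

section \<open>Coding sets of naturals\<close>

definition block :: "nat set \<Rightarrow> nat \<Rightarrow> real set" where
  "block S n = (if n \<in> S then punctured_cluster (Suc n) else {0})"

definition coded_set :: "nat set \<Rightarrow> real set" where
  "coded_set S = spread (block S)"

definition frame :: "nat set \<Rightarrow> real set" where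
  "frame S = spread (\<lambda>n. if n \<in> S then tower (Suc (Suc n)) else {0})"

definition gaps :: "nat set \<Rightarrow> real set" where
  "gaps S = spread (\<lambda>n. if n \<in> S then cluster {0} - {0} else {})"

lemma block_subset: "block S n \<subseteq> {0..1}"
  by (simp add: block_def punctured_cluster_subset)

lemma coded_set_eq_Diff: "coded_set S = frame S - gaps S"
proof -
  define C where "C = (\<lambda>n. if n \<in> S then tower (Suc (Suc n)) else {0})"
  define G where "G = (\<lambda>n. if n \<in> S then cluster {0} - {0} else {})"
  have "block S n = C n - G n" for n
    using cluster_Diff[OF tower_subset[of "Suc n"], of "{0}"]
    by (simp add: block_def punctured_cluster_def C_def G_def del: tower.simps) simp
  then have "block S = (\<lambda>n. C n - G n)"
    by (rule ext)
  moreover have "C n \<subseteq> {0..1}" "G n \<subseteq> {0..1}" for n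
    using tower_subset cluster_subset[of "{0}"] by (auto simp: C_def G_def simp del: tower.simps)
  ultimately have "spread (block S) = spread C - spread G"
    using spread_Diff[of C G] by simp
  then show ?thesis
    by (simp add: coded_set_def frame_def gaps_def C_def G_def)
qed

lemma closed_frame: "closed (frame S)"
  unfolding frame_def using compact_tower tower_subset
  by (intro closed_spread) (auto intro: compact_imp_closed simp del: tower.simps)

lemma countable_gaps: "countable (gaps S)"
  unfolding gaps_def by (intro countable_spread) (simp add: countable_cluster)

lemma gdelta_coded_set: "gdelta_in euclidean (coded_set S)"
  unfolding coded_set_eq_Diff
proof (rule gdelta_in_diff)
  show "gdelta_in euclidean (frame S)"
    using closed_frame by (simp add: closed_imp_gdelta_in metrizable_space_euclidean)
  show "fsigma_in euclidean (gaps S)"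
    using countable_gaps by (rule countable_imp_fsigma_in)
qed

lemma countable_coded_set: "countable (coded_set S)"
  unfolding coded_set_def block_def punctured_cluster_def
  by (intro countable_spread) (simp add: countable_cluster countable_tower)

lemma infinite_coded_set: "infinite (coded_set S)"
proof -
  have "inj (\<lambda>n. shift n 0)"
    by (rule injI) (simp add: shift_def)
  moreover have "range (\<lambda>n. shift n 0) \<subseteq> coded_set S"
    by (auto simp: coded_set_def spread_def block_def punctured_cluster_def)
  ultimately show ?thesis
    using range_inj_infinite infinite_super by blast
qed

lemma shift_zero_in_derived_iterate_coded_set:
  assumes "n \<in> S"
  shows "shift n 0 \<in> (derived ^^ r) (coded_set S) \<longleftrightarrow> r \<le> Suc n"
proof -
  have "\<And>m. (derived ^^ r) (block S m) \<subseteq> {0..1}"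
    using block_subset derived_iterate_subset by (metis subset_trans)
  then have "shift n 0 \<in> (derived ^^ r) (coded_set S) \<longleftrightarrow> 0 \<in> (derived ^^ r) (block S n)"
    unfolding coded_set_def derived_iterate_spread[OF block_subset]
    by (intro shift_in_spread_iff) auto
  then show ?thesis
    using assms by (simp add: block_def zero_in_derived_iterate_punctured_cluster)
qed

text \<open>The gap points shift n (shrink k 0) converge to shift n 0; they are missing from the
  coded set but are limits of the copies shrink k (tower (Suc n) - {0}) inside it.\<close>

lemma not_locally_compact_at_shift_zero:
  assumes "n \<in> S"
  shows "\<not> locally_compact_at (coded_set S) (shift n 0)"
proof (rule not_locally_compact_at)
  show "(\<lambda>k. shift n (shrink k 0)) \<longlonglongrightarrow> shift n 0"
    unfolding shift_def by (intro tendsto_intros shrink_tendsto_zero)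
next
  fix k
  have "shrink k 0 \<in> cluster {0} - {0}"
    using shrink_pos[of 0 k] by (auto simp: cluster_def)
  then have "shift n (shrink k 0) \<in> gaps S"
    using assms by (auto simp: gaps_def spread_def)
  then show "shift n (shrink k 0) \<notin> coded_set S"
    by (simp add: coded_set_eq_Diff)
  have "0 \<in> derived (tower (Suc n))"
    by (simp only: derived_tower zero_in_tower)
  then have "0 islimpt tower (Suc n)"
    unfolding derived_def by blast
  then have "0 islimpt tower (Suc n) - {0}"
    using islimpt_punctured by blast
  then have "shift n (shrink k 0) islimpt shift n ` shrink k ` (tower (Suc n) - {0})"
    by (intro islimpt_shift_image islimpt_shrink_image)
  moreover have "shrink k ` (tower (Suc n) - {0}) \<subseteq> block S n"
    using assms by (auto simp: block_def punctured_cluster_def cluster_def simp del: tower.simps)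
  then have "shift n ` shrink k ` (tower (Suc n) - {0}) \<subseteq> coded_set S"
    by (auto simp: coded_set_def spread_def)
  ultimately show "shift n (shrink k 0) islimpt coded_set S"
    by (rule islimpt_subset)
qed

lemma locally_compact_at_coded_set:
  assumes x: "x \<in> coded_set S" and not_centre: "\<And>n. n \<in> S \<Longrightarrow> x \<noteq> shift n 0"
  shows "locally_compact_at (coded_set S) x"
proof -
  \<comment> \<open>the closure of gaps S: the gap points together with their limits shift n 0\<close>
  define Z where "Z = spread (\<lambda>n. if n \<in> S then cluster {0} else {})"
  have "closed Z"
    unfolding Z_def using closed_cluster[of "{0}"] cluster_subset[of "{0}"]
    by (intro closed_spread) auto
  have "gaps S \<subseteq> Z"
    unfolding gaps_def Z_def spread_def by (intro UN_mono image_mono) auto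
  have "x \<notin> Z"
  proof
    assume "x \<in> Z"
    then obtain n q where "n \<in> S" "q \<in> cluster {0}" "x = shift n q"
      by (auto simp: Z_def spread_def split: if_splits)
    then have "x \<in> gaps S"
      using not_centre by (auto simp: gaps_def spread_def)
    then show False
      using x by (simp add: coded_set_eq_Diff)
  qed
  show ?thesis
  proof (rule locally_compact_at_if_locally_closed[OF closed_frame])
    show "open (- Z)" "x \<in> - Z"
      using \<open>closed Z\<close> \<open>x \<notin> Z\<close> by auto
    show "- Z \<inter> coded_set S = - Z \<inter> frame S"
      using \<open>gaps S \<subseteq> Z\<close> by (auto simp: coded_set_eq_Diff)
  qed
qed

lemma nonlc_ranks_coded_set: "nonlc_ranks (coded_set S) = Suc ` S"
proof (intro equalityI subsetI)
  fix r assume "r \<in> nonlc_ranks (coded_set S)"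
  then obtain x where x: "x \<in> (derived ^^ r) (coded_set S)" "x \<notin> (derived ^^ Suc r) (coded_set S)"
    and nlc: "\<not> locally_compact_at (coded_set S) x"
    by (auto simp: nonlc_ranks_def)
  then obtain n where "n \<in> S" "x = shift n 0"
    using locally_compact_at_coded_set derived_iterate_subset by blast
  then have "r = Suc n"
    using x shift_zero_in_derived_iterate_coded_set by (simp del: funpow.simps)
  then show "r \<in> Suc ` S"
    using \<open>n \<in> S\<close> by blast
next
  fix r assume "r \<in> Suc ` S"
  then obtain n where n: "n \<in> S" "r = Suc n"
    by blast
  then show "r \<in> nonlc_ranks (coded_set S)"
    unfolding nonlc_ranks_def
    using shift_zero_in_derived_iterate_coded_set[OF n(1)] not_locally_compact_at_shift_zero[OF n(1)]
    by (intro CollectI bexI[of _ "shift n 0"]) (simp_all del: funpow.simps)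
qed

lemma homeomorphic_coded_set_imp_eq:
  assumes "coded_set S homeomorphic coded_set T"
  shows "S = T"
proof -
  have "Suc ` S = Suc ` T"
    using homeomorphic_nonlc_ranks_eq[OF assms] by (simp add: nonlc_ranks_coded_set)
  then show ?thesis
    by (simp add: inj_image_eq_iff)
qed

lemma inj_coded_set: "inj coded_set"
  by (rule injI) (metis homeomorphic_coded_set_imp_eq homeomorphic_refl)

theorem theorem3:
  shows "\<exists>\<H> :: real set set.
           (\<forall>H\<in>\<H>. countable H \<and> infinite H \<and> gdelta_in euclidean H) \<and>
           \<H> \<approx> (UNIV :: real set) \<and>
           (\<forall>H1\<in>\<H>. \<forall>H2\<in>\<H>. H1 \<noteq> H2 \<longrightarrow> \<not> (H1 homeomorphic H2))"
proof (intro exI[of _ "range coded_set"] conjI)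
  show "\<forall>H\<in>range coded_set. countable H \<and> infinite H \<and> gdelta_in euclidean H"
    using countable_coded_set infinite_coded_set gdelta_coded_set by blast
  have "range coded_set \<approx> (UNIV :: nat set set)"
    by (rule inj_on_image_eqpoll_self[OF inj_coded_set])
  then show "range coded_set \<approx> (UNIV :: real set)"
    using nat_sets_eqpoll_reals eqpoll_trans by blast
  show "\<forall>H1\<in>range coded_set. \<forall>H2\<in>range coded_set. H1 \<noteq> H2 \<longrightarrow> \<not> H1 homeomorphic H2"
    using homeomorphic_coded_set_imp_eq by blast
qed

end
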